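(* For $t\in\{0,\delta,\dots,T\}$ let $v^t$ be the value function at time $t$ and $v_h^t$ its approximation given by the ideal max-plus finite element method. Then \[ \|v_h^T-v^T\|_\infty\leq\|P_{\mathcal W_h}(v^0)-v^0\|_\infty+\sum_{t\in\{\delta,2\delta,\dots,T\}}\|P_{\mathcal W_h}(P^{-\mathcal Z_h}(v^t))-v^t\|_\infty. \]
   Context: Optimal control setting: $X\subseteq\mathbb{R}^n$, $U\subseteq\mathbb{R}^m$, $\ell:X\times U\to\mathbb R$, $f:X\times U\to\mathbb{R}^n$, $T>0$, $\phi:X\to\mathbb{R}\cup\{-\infty\}$. For $t\ge0$ and $g:X\to\overline{\mathbb R}$, $S^tg(x)=\sup\{\int_0^t\ell(\mathbf x(s),\mathbf u(s))ds+g(\mathbf x(t))\}$ over measurable $\mathbf u:[0,t]\to U$ and absolutely continuous $\mathbf x:[0,t]\to X$ with $\dot{\mathbf x}=f(\mathbf x,\mathbf u)$ a.e. and $\mathbf x(0)=x$; value function $v^t=S^t\phi$. Arithmetic in $\overline{\mathbb R}=\mathbb{R}\cup\{\pm\infty\}$ with $-\infty$ absorbing for $+$; $a\backslash b=\max\{\lambda\in\overline{\mathbb{R}}:a+\lambda\leq b\}$. $\langle u,v\rangle=\sup_{x\in X}(u(x)+v(x))$. Finite elements $w_1,\dots,w_p$ and test functions $z_1,\dots,z_q$, functions $X\to\mathbb{R}\cup\{-\infty\}$. $W_h\lambda=\sup_i(w_i+\lambda_i)$; $(W_h\backslash g)_i=\inf_{x\in X}(w_i(x)\backslash g(x))$;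 $P_{\mathcal W_h}g=W_h(W_h\backslash g)$; $P^{-\mathcal Z_h}g(x)=\min_j\big(z_j(x)\backslash\langle z_j,g\rangle\big)$. For a matrix $A$: $(A\lambda)_j=\max_k(A_{jk}+\lambda_k)$, $(A\backslash\mu)_i=\min_jA_{ji}\backslash\mu_j$. Ideal max-plus finite element method: $N\geq1$, $\delta=T/N$, $(M_h)_{ji}=\langle z_j,w_i\rangle$, $(K_h)_{ji}=\langle z_j,S^\delta w_i\rangle$, $\lambda^0=W_h\backslash\phi$, $\lambda^{t+\delta}=M_h\backslash(K_h\lambda^t)$ for $t=0,\dots,T-\delta$, $v_h^t=W_h\lambda^t$. For $u,v:X\to\overline{\mathbb R}$, $\|u-v\|_\infty=\inf\{\lambda\geq0: v-\lambda\leq u\leq v+\lambda\}$ (equal to $\sup_{x}|u(x)-v(x)|$ when $u-v$ is finite-valued, $+\infty$ if no such $\lambda$). *)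

theory Defs
  imports "HOL-Analysis.Analysis" "HOL-Library.Extended_Real"
begin

definition mp_plus :: "ereal \<Rightarrow> ereal \<Rightarrow> ereal" where
  "mp_plus a b = (if a = -\<infinity> \<or> b = -\<infinity> then -\<infinity> else a + b)"

definition resid :: "ereal \<Rightarrow> ereal \<Rightarrow> ereal" where
  "resid a b = (GREATEST l. mp_plus a l \<le> b)"

definition mp_pair :: "'x set \<Rightarrow> ('x \<Rightarrow> ereal) \<Rightarrow> ('x \<Rightarrow> ereal) \<Rightarrow> ereal" where
  "mp_pair X u v = (SUP x\<in>X. mp_plus (u x) (v x))"

definition Wop :: "nat \<Rightarrow> (nat \<Rightarrow> 'x \<Rightarrow> ereal) \<Rightarrow> (nat \<Rightarrow> ereal) \<Rightarrow> 'x \<Rightarrow> ereal" where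
  "Wop p w lam = (\<lambda>x. SUP i\<in>{..<p}. mp_plus (w i x) (lam i))"

definition Wres :: "'x set \<Rightarrow> (nat \<Rightarrow> 'x \<Rightarrow> ereal) \<Rightarrow> ('x \<Rightarrow> ereal) \<Rightarrow> nat \<Rightarrow> ereal" where
  "Wres X w g = (\<lambda>i. INF x\<in>X. resid (w i x) (g x))"

definition PW :: "'x set \<Rightarrow> nat \<Rightarrow> (nat \<Rightarrow> 'x \<Rightarrow> ereal) \<Rightarrow> ('x \<Rightarrow> ereal) \<Rightarrow> 'x \<Rightarrow> ereal" where
  "PW X p w g = Wop p w (Wres X w g)"

definition PZ :: "'x set \<Rightarrow> nat \<Rightarrow> (nat \<Rightarrow> 'x \<Rightarrow> ereal) \<Rightarrow> ('x \<Rightarrow> ereal) \<Rightarrow> 'x \<Rightarrow> ereal" where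
  "PZ X q z g = (\<lambda>x. Min ((\<lambda>j. resid (z j x) (mp_pair X (z j) g)) ` {..<q}))"

definition mat_app :: "nat \<Rightarrow> (nat \<Rightarrow> nat \<Rightarrow> ereal) \<Rightarrow> (nat \<Rightarrow> ereal) \<Rightarrow> nat \<Rightarrow> ereal" where
  "mat_app p A lam = (\<lambda>j. Max ((\<lambda>k. mp_plus (A j k) (lam k)) ` {..<p}))"

definition mat_res :: "nat \<Rightarrow> (nat \<Rightarrow> nat \<Rightarrow> ereal) \<Rightarrow> (nat \<Rightarrow> ereal) \<Rightarrow> nat \<Rightarrow> ereal" where
  "mat_res q A mu = (\<lambda>i. Min ((\<lambda>j. resid (A j i) (mu j)) ` {..<q}))"

(* ||u - v||_inf = inf { lambda \<ge> 0 : v - lambda \<le> u \<le> v + lambda on X }, +\<infinity> if no such lambda *)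
definition sup_dist :: "'x set \<Rightarrow> ('x \<Rightarrow> ereal) \<Rightarrow> ('x \<Rightarrow> ereal) \<Rightarrow> ereal" where
  "sup_dist X u v = Inf (ereal ` {l::real. l \<ge> 0 \<and>
      (\<forall>x\<in>X. v x - ereal l \<le> u x \<and> u x \<le> v x + ereal l)})"

definition abs_cont_on :: "real \<Rightarrow> real \<Rightarrow> (real \<Rightarrow> 'a::real_normed_vector) \<Rightarrow> bool" where
  "abs_cont_on a b g \<longleftrightarrow> (\<forall>e>0. \<exists>d>0. \<forall>(n::nat) (c::nat\<Rightarrow>real) (e'::nat\<Rightarrow>real).
      (\<forall>k<n. a \<le> c k \<and> c k \<le> e' k \<and> e' k \<le> b) \<and>
      (\<forall>k<n. \<forall>l<n. k \<noteq> l \<longrightarrow> e' k \<le> c l \<or> e' l \<le> c k) \<and>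
      (\<Sum>k<n. e' k - c k) < d \<longrightarrow> (\<Sum>k<n. norm (g (e' k) - g (c k))) < e)"

definition admissible ::
  "('n set) \<Rightarrow> ('m set) \<Rightarrow> ('n::euclidean_space \<Rightarrow> 'm::euclidean_space \<Rightarrow> 'n) \<Rightarrow>
   (real \<Rightarrow> 'm) \<Rightarrow> (real \<Rightarrow> 'n) \<Rightarrow> real \<Rightarrow> 'n \<Rightarrow> bool" where
  "admissible X U f uu xx t x0 \<longleftrightarrow>
     uu \<in> borel_measurable (restrict_space lebesgue {0..t}) \<and>
     (\<forall>s\<in>{0..t}. uu s \<in> U) \<and>
     (\<forall>s\<in>{0..t}. xx s \<in> X) \<and>
     abs_cont_on 0 t xx \<and>
     (AE s in lebesgue. s \<in> {0..t} \<longrightarrow>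
        (xx has_vector_derivative f (xx s) (uu s)) (at s within {0..t})) \<and>
     xx 0 = x0"

definition Ssem ::
  "('n set) \<Rightarrow> ('m set) \<Rightarrow> ('n::euclidean_space \<Rightarrow> 'm::euclidean_space \<Rightarrow> real) \<Rightarrow>
   ('n \<Rightarrow> 'm \<Rightarrow> 'n) \<Rightarrow> real \<Rightarrow> ('n \<Rightarrow> ereal) \<Rightarrow> 'n \<Rightarrow> ereal" where
  "Ssem X U ell f t g x0 = Sup {mp_plus (ereal (LINT s:{0..t}|lborel. ell (xx s) (uu s))) (g (xx t)) | uu xx.
       admissible X U f uu xx t x0 \<and> set_integrable lborel {0..t} (\<lambda>s. ell (xx s) (uu s))}"

definition Mh :: "'x set \<Rightarrow> (nat \<Rightarrow> 'x \<Rightarrow> ereal) \<Rightarrow> (nat \<Rightarrow> 'x \<Rightarrow> ereal) \<Rightarrow> nat \<Rightarrow> nat \<Rightarrow> ereal" where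
  "Mh X z w = (\<lambda>j i. mp_pair X (z j) (w i))"

definition Kh ::
  "('n set) \<Rightarrow> ('m set) \<Rightarrow> ('n::euclidean_space \<Rightarrow> 'm::euclidean_space \<Rightarrow> real) \<Rightarrow>
   ('n \<Rightarrow> 'm \<Rightarrow> 'n) \<Rightarrow> real \<Rightarrow> (nat \<Rightarrow> 'n \<Rightarrow> ereal) \<Rightarrow> (nat \<Rightarrow> 'n \<Rightarrow> ereal) \<Rightarrow> nat \<Rightarrow> nat \<Rightarrow> ereal" where
  "Kh X U ell f \<delta> z w = (\<lambda>j i. mp_pair X (z j) (Ssem X U ell f \<delta> (w i)))"

definition fem_coeffs ::
  "('n set) \<Rightarrow> ('m set) \<Rightarrow> ('n::euclidean_space \<Rightarrow> 'm::euclidean_space \<Rightarrow> real) \<Rightarrow>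
   ('n \<Rightarrow> 'm \<Rightarrow> 'n) \<Rightarrow> real \<Rightarrow> nat \<Rightarrow> nat \<Rightarrow> (nat \<Rightarrow> 'n \<Rightarrow> ereal) \<Rightarrow> (nat \<Rightarrow> 'n \<Rightarrow> ereal) \<Rightarrow>
   ('n \<Rightarrow> ereal) \<Rightarrow> nat \<Rightarrow> nat \<Rightarrow> ereal" where
  "fem_coeffs X U ell f \<delta> p q w z \<phi> k =
     ((\<lambda>lam. mat_res q (Mh X z w) (mat_app p (Kh X U ell f \<delta> z w) lam)) ^^ k) (Wres X w \<phi>)"

definition fem_value ::
  "('n set) \<Rightarrow> ('m set) \<Rightarrow> ('n::euclidean_space \<Rightarrow> 'm::euclidean_space \<Rightarrow> real) \<Rightarrow>
   ('n \<Rightarrow> 'm \<Rightarrow> 'n) \<Rightarrow> real \<Rightarrow> nat \<Rightarrow> nat \<Rightarrow> (nat \<Rightarrow> 'n \<Rightarrow> ereal) \<Rightarrow> (nat \<Rightarrow> 'n \<Rightarrow> ereal) \<Rightarrow>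
   ('n \<Rightarrow> ereal) \<Rightarrow> nat \<Rightarrow> 'n \<Rightarrow> ereal" where
  "fem_value X U ell f \<delta> p q w z \<phi> k = Wop p w (fem_coeffs X U ell f \<delta> p q w z \<phi> k)"

end

theory Submission
  imports Defs
begin

text \<open>
  Dynamic programming gives v^(t+\<delta>) = S^\<delta> v^t. Since S^\<delta> is max-plus linear,
  residuation turns the matrix recursion \<lambda>^(t+\<delta>) = M_h \ (K_h \<lambda>^t) into
  v_h^(t+\<delta>) = P_W (P^-Z (S^\<delta> v_h^t)). The operators S^\<delta>, P_W and P^-Z are monotone
  and commute with adding constants, hence nonexpansive for the sup-norm, so each step adds
  at most the projection error ||P_W (P^-Z v^t) - v^t|| to the error.
\<close>

lemma mp_plus_commute: "mp_plus a b = mp_plus b a"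
  by (auto simp: mp_plus_def add.commute)

lemma mp_plus_assoc: "mp_plus (mp_plus a b) c = mp_plus a (mp_plus b c)"
  unfolding mp_plus_def by (cases a; cases b; cases c) auto

lemma mp_plus_mono: "a \<le> a' \<Longrightarrow> b \<le> b' \<Longrightarrow> mp_plus a b \<le> mp_plus a' b'"
  unfolding mp_plus_def by (cases a; cases b; cases a'; cases b') auto

lemma mp_plus_ereal: "mp_plus a (ereal c) = a + ereal c"
  unfolding mp_plus_def by (cases a) auto

lemma mp_plus_ereal_add: "mp_plus (ereal (x + y)) z = mp_plus (ereal x) (mp_plus (ereal y) z)"
  unfolding mp_plus_def by (cases z) auto

lemma resid_eq:
  "resid a b = (if a = -\<infinity> then \<infinity> else if a = \<infinity> then (if b = \<infinity> then \<infinity> else -\<infinity>) else b - a)"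
    (is "_ = ?r")
proof -
  have "mp_plus a l \<le> b \<longleftrightarrow> l \<le> ?r" for l
    unfolding mp_plus_def by (cases a; cases b; cases l) (auto simp: ereal_le_minus_iff algebra_simps)
  then show ?thesis unfolding resid_def by (intro Greatest_equality) auto
qed

lemma resid_galois: "mp_plus a l \<le> b \<longleftrightarrow> l \<le> resid a b"
  unfolding mp_plus_def resid_eq
  by (cases a; cases b; cases l) (auto simp: ereal_le_minus_iff algebra_simps)

lemma resid_mono: "b \<le> b' \<Longrightarrow> resid a b \<le> resid a b'"
  by (metis resid_galois order_refl order_trans)

lemma resid_add_ereal: "resid a (b + ereal c) = resid a b + ereal c"
  unfolding resid_eq by (cases a; cases b) auto

lemma mp_plus_SUP: "mp_plus a (SUP i\<in>I. g i) = (SUP i\<in>I. mp_plus a (g i))"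
proof (rule antisym)
  show "mp_plus a (SUP i\<in>I. g i) \<le> (SUP i\<in>I. mp_plus a (g i))"
    by (subst resid_galois, rule SUP_least) (metis SUP_upper resid_galois)
  show "(SUP i\<in>I. mp_plus a (g i)) \<le> mp_plus a (SUP i\<in>I. g i)"
    by (rule SUP_least, rule mp_plus_mono) (auto intro: SUP_upper)
qed

lemma SUP_mp_plus: "mp_plus (SUP i\<in>I. g i) a = (SUP i\<in>I. mp_plus (g i) a)"
  by (simp add: mp_plus_commute[of _ a] mp_plus_SUP)

lemma resid_resid: "resid a (resid b c) = resid (mp_plus b a) c"
proof -
  have "l \<le> resid a (resid b c) \<longleftrightarrow> l \<le> resid (mp_plus b a) c" for l
    by (simp add: resid_galois[symmetric] mp_plus_assoc)
  then show ?thesis by (meson order_antisym order_refl)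
qed

lemma resid_SUP: "resid (SUP i\<in>I. g i) c = (INF i\<in>I. resid (g i) c)"
proof -
  have "l \<le> resid (SUP i\<in>I. g i) c \<longleftrightarrow> l \<le> (INF i\<in>I. resid (g i) c)" for l
    by (simp add: le_INF_iff resid_galois[symmetric] SUP_mp_plus SUP_le_iff)
  then show ?thesis by (meson order_antisym order_refl)
qed

lemma resid_INF: "resid a (INF i\<in>I. g i) = (INF i\<in>I. resid a (g i))"
proof -
  have "l \<le> resid a (INF i\<in>I. g i) \<longleftrightarrow> l \<le> (INF i\<in>I. resid a (g i))" for l
    by (simp add: le_INF_iff resid_galois[symmetric])
  then show ?thesis by (meson order_antisym order_refl)
qed

lemma INF_add_ereal_le: "(INF x\<in>A. r x + ereal c) \<le> (INF x\<in>A. r x) + ereal c"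
proof -
  have "(INF x\<in>A. r x + ereal c) - ereal c \<le> (INF x\<in>A. r x)"
  proof (rule INF_greatest)
    fix x assume "x \<in> A"
    then have "(INF x\<in>A. r x + ereal c) \<le> r x + ereal c" by (rule INF_lower)
    then show "(INF x\<in>A. r x + ereal c) - ereal c \<le> r x"
      by (cases "r x") (auto simp: ereal_minus_le_iff)
  qed
  then show ?thesis
    by (cases "INF x\<in>A. r x + ereal c"; cases "INF x\<in>A. r x") auto
qed

section \<open>Sup-norm distance and nonexpansive operators\<close>

definition close_on :: "'x set \<Rightarrow> real \<Rightarrow> ('x \<Rightarrow> ereal) \<Rightarrow> ('x \<Rightarrow> ereal) \<Rightarrow> bool" where
  "close_on X l u v \<longleftrightarrow> l \<ge> 0 \<and> (\<forall>x\<in>X. v x - ereal l \<le> u x \<and> u x \<le> v x + ereal l)"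

lemma sup_dist_close_on: "sup_dist X u v = (INF l\<in>{l. close_on X l u v}. ereal l)"
  unfolding sup_dist_def close_on_def by simp

lemma sup_dist_nonneg: "0 \<le> sup_dist X u v"
  unfolding sup_dist_close_on by (rule INF_greatest) (auto simp: close_on_def)

lemma close_on_trans:
  assumes uv: "close_on X l1 u v" and vw: "close_on X l2 v w"
  shows "close_on X (l1 + l2) u w"
  unfolding close_on_def
proof (intro conjI ballI)
  show "0 \<le> l1 + l2" using uv vw by (simp add: close_on_def)
  fix x assume x: "x \<in> X"
  have "w x - ereal (l1 + l2) = (w x - ereal l2) - ereal l1" by (cases "w x") auto
  also have "\<dots> \<le> v x - ereal l1" using vw x by (simp add: ereal_minus_mono close_on_def)
  also have "\<dots> \<le> u x" using uv x by (simp add: close_on_def)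
  finally show "w x - ereal (l1 + l2) \<le> u x" .
  have "u x \<le> v x + ereal l1" using uv x by (simp add: close_on_def)
  also have "\<dots> \<le> (w x + ereal l2) + ereal l1" using vw x by (simp add: add_right_mono close_on_def)
  also have "\<dots> = w x + ereal (l1 + l2)" by (cases "w x") auto
  finally show "u x \<le> w x + ereal (l1 + l2)" .
qed

lemma sup_dist_triangle: "sup_dist X u w \<le> sup_dist X u v + sup_dist X v w"
proof -
  define A where "A = {l. close_on X l u v}"
  define B where "B = {l. close_on X l v w}"
  have dists: "sup_dist X u v = (INF l\<in>A. ereal l)" "sup_dist X v w = (INF l\<in>B. ereal l)"
    by (simp_all add: sup_dist_close_on A_def B_def)
  show ?thesis
  proof (cases "A = {} \<or> B = {}")
    case True
    then have "sup_dist X u v = \<infinity> \<or> sup_dist X v w = \<infinity>"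
      unfolding dists by (auto simp: top_ereal_def[symmetric])
    then show ?thesis using sup_dist_nonneg[of X u v] sup_dist_nonneg[of X v w] by auto
  next
    case False
    have B_nonneg: "0 \<le> (INF l\<in>B. ereal l)" by (rule INF_greatest) (auto simp: B_def close_on_def)
    have "sup_dist X u w \<le> ereal l1 + ereal l2" if "l1 \<in> A" "l2 \<in> B" for l1 l2
    proof -
      have "l1 + l2 \<in> {l. close_on X l u w}" using that by (auto simp: A_def B_def intro: close_on_trans)
      then show ?thesis unfolding sup_dist_close_on by (metis INF_lower plus_ereal.simps(1))
    qed
    then have "sup_dist X u w \<le> (INF l1\<in>A. INF l2\<in>B. ereal l1 + ereal l2)"
      by (intro INF_greatest) simp
    also have "\<dots> = (INF l1\<in>A. ereal l1 + (INF l2\<in>B. ereal l2))"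
      using False by (intro INF_cong refl INF_ereal_add_right) (auto simp: B_def close_on_def)
    also have "\<dots> = (INF l1\<in>A. ereal l1) + (INF l2\<in>B. ereal l2)"
      using False B_nonneg by (intro INF_ereal_add_left) (auto simp: A_def close_on_def)
    finally show ?thesis unfolding dists .
  qed
qed

definition monotone_subhomogeneous :: "'x set \<Rightarrow> (('x \<Rightarrow> ereal) \<Rightarrow> 'x \<Rightarrow> ereal) \<Rightarrow> bool" where
  "monotone_subhomogeneous X P \<longleftrightarrow>
     (\<forall>g h. (\<forall>x\<in>X. g x \<le> h x) \<longrightarrow> (\<forall>x\<in>X. P g x \<le> P h x)) \<and>
     (\<forall>g c. \<forall>x\<in>X. P (\<lambda>y. g y + ereal c) x \<le> P g x + ereal c)"

lemma monotone_subhomogeneousI: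
  assumes "\<And>g h x. (\<And>y. y \<in> X \<Longrightarrow> g y \<le> h y) \<Longrightarrow> x \<in> X \<Longrightarrow> P g x \<le> P h x"
    and "\<And>g c x. x \<in> X \<Longrightarrow> P (\<lambda>y. g y + ereal c) x \<le> P g x + ereal c"
  shows "monotone_subhomogeneous X P"
  using assms unfolding monotone_subhomogeneous_def by blast

lemma monotone_subhomogeneousD:
  assumes "monotone_subhomogeneous X P"
  shows "(\<And>y. y \<in> X \<Longrightarrow> g y \<le> h y) \<Longrightarrow> x \<in> X \<Longrightarrow> P g x \<le> P h x"
    and "x \<in> X \<Longrightarrow> P (\<lambda>y. g y + ereal c) x \<le> P g x + ereal c"
  using assms unfolding monotone_subhomogeneous_def by blast+

lemma monotone_subhomogeneous_comp:
  assumes P: "monotone_subhomogeneous X P" and Q: "monotone_subhomogeneous X Q"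
  shows "monotone_subhomogeneous X (\<lambda>g. P (Q g))"
proof (rule monotone_subhomogeneousI)
  show "P (Q g) x \<le> P (Q h) x" if "\<And>y. y \<in> X \<Longrightarrow> g y \<le> h y" "x \<in> X" for g h x
    using that by (blast intro: monotone_subhomogeneousD(1)[OF P] monotone_subhomogeneousD(1)[OF Q])
  fix g c x assume x: "x \<in> X"
  have "P (Q (\<lambda>y. g y + ereal c)) x \<le> P (\<lambda>y. Q g y + ereal c) x"
    using x by (blast intro: monotone_subhomogeneousD(1)[OF P] monotone_subhomogeneousD(2)[OF Q])
  also have "\<dots> \<le> P (Q g) x + ereal c" using x by (rule monotone_subhomogeneousD(2)[OF P])
  finally show "P (Q (\<lambda>y. g y + ereal c)) x \<le> P (Q g) x + ereal c" .
qed

lemma close_on_monotone_subhomogeneous: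
  assumes P: "monotone_subhomogeneous X P" and uv: "close_on X l u v"
  shows "close_on X l (P u) (P v)"
proof -
  note mono = monotone_subhomogeneousD(1)[OF P] and sub = monotone_subhomogeneousD(2)[OF P]
  have super: "P g x + ereal c \<le> P (\<lambda>y. g y + ereal c) x" if "x \<in> X" for g c x
  proof - \<comment> \<open>subhomogeneity at \<open>-c\<close> gives the reverse inequality\<close>
    have "g y + ereal c + ereal (-c) = g y" for y by (cases "g y") auto
    then have "P g x = P (\<lambda>y. (g y + ereal c) + ereal (-c)) x" by simp
    also have "\<dots> \<le> P (\<lambda>y. g y + ereal c) x + ereal (-c)" using that by (rule sub)
    finally show ?thesis by (cases "P (\<lambda>y. g y + ereal c) x"; cases "P g x") auto
  qed
  have l: "0 \<le> l" and lower: "\<And>x. x \<in> X \<Longrightarrow> v x + ereal (-l) \<le> u x"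
    and upper: "\<And>x. x \<in> X \<Longrightarrow> u x \<le> v x + ereal l"
    using uv by (auto simp: close_on_def minus_ereal_def)
  have "P v x + ereal (-l) \<le> P u x \<and> P u x \<le> P v x + ereal l" if "x \<in> X" for x
    using super[OF that] sub[OF that] mono[OF lower that] mono[OF upper that] by (meson order_trans)
  then show ?thesis using l unfolding close_on_def by (simp add: minus_ereal_def)
qed

lemma sup_dist_monotone_subhomogeneous:
  "monotone_subhomogeneous X P \<Longrightarrow> sup_dist X (P u) (P v) \<le> sup_dist X u v"
  unfolding sup_dist_close_on
  by (rule INF_superset_mono) (auto intro: close_on_monotone_subhomogeneous)

lemma sup_dist_iteration_le:
  assumes Q: "monotone_subhomogeneous X Q" and S: "monotone_subhomogeneous X S"
    and vh: "\<And>k. vh (Suc k) = Q (S (vh k))" and v: "\<And>k. v (Suc k) = S (v k)"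
  shows "sup_dist X (vh (Suc n)) (v (Suc n))
    \<le> sup_dist X (S (vh 0)) (S (v 0)) + (\<Sum>k\<in>{1..Suc n}. sup_dist X (Q (v k)) (v k))"
proof -
  have step: "sup_dist X (Q g) h \<le> sup_dist X g h + sup_dist X (Q h) h" for g h
  proof -
    have "sup_dist X (Q g) h \<le> sup_dist X (Q g) (Q h) + sup_dist X (Q h) h"
      by (rule sup_dist_triangle)
    also have "\<dots> \<le> sup_dist X g h + sup_dist X (Q h) h"
      by (intro add_right_mono sup_dist_monotone_subhomogeneous Q)
    finally show ?thesis .
  qed
  show ?thesis
  proof (induction n)
    case 0
    show ?case using step[of "S (vh 0)" "v 1"] by (simp add: vh v)
  next
    case (Suc n)
    have "sup_dist X (vh (Suc (Suc n))) (v (Suc (Suc n)))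
        \<le> sup_dist X (S (vh (Suc n))) (S (v (Suc n))) + sup_dist X (Q (v (Suc (Suc n)))) (v (Suc (Suc n)))"
      using step[of "S (vh (Suc n))" "v (Suc (Suc n))"] by (simp add: vh v)
    also have "\<dots> \<le> sup_dist X (vh (Suc n)) (v (Suc n)) + sup_dist X (Q (v (Suc (Suc n)))) (v (Suc (Suc n)))"
      by (intro add_right_mono sup_dist_monotone_subhomogeneous S)
    also have "\<dots> \<le> sup_dist X (S (vh 0)) (S (v 0)) + (\<Sum>k\<in>{1..Suc (Suc n)}. sup_dist X (Q (v k)) (v k))"
      using add_right_mono[OF Suc.IH] by (simp add: add.assoc)
    finally show ?case .
  qed
qed

lemma Wop_mono: "(\<And>i. l i \<le> l' i) \<Longrightarrow> Wop p w l x \<le> Wop p w l' x"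
  unfolding Wop_def by (rule SUP_mono) (blast intro: mp_plus_mono)

lemma Wop_add_ereal: "Wop p w (\<lambda>i. l i + ereal c) x = Wop p w l x + ereal c"
  unfolding Wop_def by (simp add: mp_plus_ereal[symmetric] mp_plus_assoc[symmetric] SUP_mp_plus)

lemma monotone_subhomogeneous_PW: "monotone_subhomogeneous X (PW X p w)"
  unfolding PW_def
proof (rule monotone_subhomogeneousI)
  fix g h :: "_ \<Rightarrow> ereal" and x assume "\<And>y. y \<in> X \<Longrightarrow> g y \<le> h y"
  then show "Wop p w (Wres X w g) x \<le> Wop p w (Wres X w h) x"
    unfolding Wres_def by (intro Wop_mono INF_mono) (blast intro: resid_mono)
next
  fix g :: "_ \<Rightarrow> ereal" and c x
  have "Wres X w (\<lambda>y. g y + ereal c) i \<le> Wres X w g i + ereal c" for i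
    unfolding Wres_def resid_add_ereal by (rule INF_add_ereal_le)
  then show "Wop p w (Wres X w (\<lambda>y. g y + ereal c)) x \<le> Wop p w (Wres X w g) x + ereal c"
    unfolding Wop_add_ereal[symmetric] by (rule Wop_mono)
qed

lemma PZ_eq_INF: "q \<ge> 1 \<Longrightarrow> PZ X q z g x = (INF j\<in>{..<q}. resid (z j x) (mp_pair X (z j) g))"
  unfolding PZ_def by (subst cInf_eq_Min) (auto simp: lessThan_empty_iff)

lemma mp_pair_add_ereal: "mp_pair X h (\<lambda>y. g y + ereal c) = mp_pair X h g + ereal c"
  unfolding mp_pair_def by (simp add: mp_plus_ereal[symmetric] mp_plus_assoc[symmetric] SUP_mp_plus)

lemma monotone_subhomogeneous_PZ:
  assumes q: "q \<ge> 1" shows "monotone_subhomogeneous X (PZ X q z)"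
proof (rule monotone_subhomogeneousI)
  fix g h :: "_ \<Rightarrow> ereal" and x assume "\<And>y. y \<in> X \<Longrightarrow> g y \<le> h y"
  then have "mp_pair X (z j) g \<le> mp_pair X (z j) h" for j
    unfolding mp_pair_def by (intro SUP_mono) (blast intro: mp_plus_mono)
  then show "PZ X q z g x \<le> PZ X q z h x"
    unfolding PZ_eq_INF[OF q] by (intro INF_mono) (blast intro: resid_mono)
next
  fix g :: "_ \<Rightarrow> ereal" and c x
  show "PZ X q z (\<lambda>y. g y + ereal c) x \<le> PZ X q z g x + ereal c"
    unfolding PZ_eq_INF[OF q] mp_pair_add_ereal resid_add_ereal by (rule INF_add_ereal_le)
qed

section \<open>Absolute continuity\<close>

definition glue :: "real \<Rightarrow> (real \<Rightarrow> 'a) \<Rightarrow> (real \<Rightarrow> 'a) \<Rightarrow> real \<Rightarrow> 'a" where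
  "glue a x1 x2 s = (if s \<le> a then x1 s else x2 (s - a))"

definition nonoverlapping_in :: "real \<Rightarrow> real \<Rightarrow> nat \<Rightarrow> (nat \<Rightarrow> real) \<Rightarrow> (nat \<Rightarrow> real) \<Rightarrow> bool" where
  "nonoverlapping_in a b n c e \<longleftrightarrow>
     (\<forall>k<n. a \<le> c k \<and> c k \<le> e k \<and> e k \<le> b) \<and> (\<forall>k<n. \<forall>l<n. k \<noteq> l \<longrightarrow> e k \<le> c l \<or> e l \<le> c k)"

lemma abs_cont_on_iff: "abs_cont_on a b g \<longleftrightarrow> (\<forall>\<epsilon>>0. \<exists>d>0. \<forall>n c e. nonoverlapping_in a b n c e \<longrightarrow>
     (\<Sum>k<n. e k - c k) < d \<longrightarrow> (\<Sum>k<n. norm (g (e k) - g (c k))) < \<epsilon>)"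
  unfolding abs_cont_on_def nonoverlapping_in_def by (simp only: imp_conjL conj_assoc)

lemma abs_cont_onE:
  assumes "abs_cont_on a b g" "\<epsilon> > 0"
  obtains d where "d > 0" "\<And>n c e. nonoverlapping_in a b n c e \<Longrightarrow> (\<Sum>k<n. e k - c k) < d \<Longrightarrow>
    (\<Sum>k<n. norm (g (e k) - g (c k))) < \<epsilon>"
  using assms unfolding abs_cont_on_iff by meson

lemma nonoverlapping_in_image:
  assumes ce: "nonoverlapping_in a b n c e"
    and mono: "\<And>x y. a \<le> x \<Longrightarrow> x \<le> y \<Longrightarrow> y \<le> b \<Longrightarrow> \<phi> x \<le> \<phi> y"
    and "a' \<le> \<phi> a" "\<phi> b \<le> b'"
  shows "nonoverlapping_in a' b' n (\<lambda>k. \<phi> (c k)) (\<lambda>k. \<phi> (e k))"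
proof -
  have inside: "a \<le> c k" "c k \<le> e k" "e k \<le> b" if "k < n" for k
    using ce that by (auto simp: nonoverlapping_in_def)
  have "a' \<le> \<phi> (c k) \<and> \<phi> (c k) \<le> \<phi> (e k) \<and> \<phi> (e k) \<le> b'" if "k < n" for k
    using inside[OF that] assms(3,4) mono by (meson order_trans order_refl)
  moreover have "\<phi> (e k) \<le> \<phi> (c l) \<or> \<phi> (e l) \<le> \<phi> (c k)" if "k < n" "l < n" "k \<noteq> l" for k l
    using ce that inside[OF that(1)] inside[OF that(2)] unfolding nonoverlapping_in_def
    by (meson mono order_trans)
  ultimately show ?thesis unfolding nonoverlapping_in_def by blast
qed

lemma abs_cont_on_compose:
  assumes g: "abs_cont_on a' b' g"
    and mono: "\<And>x y. a \<le> x \<Longrightarrow> x \<le> y \<Longrightarrow> y \<le> b \<Longrightarrow> \<phi> x \<le> \<phi> y"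
    and lip: "\<And>x y. a \<le> x \<Longrightarrow> x \<le> y \<Longrightarrow> y \<le> b \<Longrightarrow> \<phi> y - \<phi> x \<le> y - x"
    and range: "a' \<le> \<phi> a" "\<phi> b \<le> b'"
  shows "abs_cont_on a b (\<lambda>s. g (\<phi> s))"
  unfolding abs_cont_on_iff
proof (intro allI impI)
  fix \<epsilon> :: real assume "\<epsilon> > 0"
  then obtain d where d: "d > 0" and small: "\<And>n c e. nonoverlapping_in a' b' n c e \<Longrightarrow>
      (\<Sum>k<n. e k - c k) < d \<Longrightarrow> (\<Sum>k<n. norm (g (e k) - g (c k))) < \<epsilon>"
    using abs_cont_onE[OF g] by blast
  show "\<exists>d>0. \<forall>n c e. nonoverlapping_in a b n c e \<longrightarrow> (\<Sum>k<n. e k - c k) < d \<longrightarrow>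
      (\<Sum>k<n. norm (g (\<phi> (e k)) - g (\<phi> (c k)))) < \<epsilon>"
  proof (intro exI[of _ d] conjI allI impI d)
    fix n c e assume ce: "nonoverlapping_in a b n c e" and len: "(\<Sum>k<n. e k - c k) < d"
    have "(\<Sum>k<n. \<phi> (e k) - \<phi> (c k)) \<le> (\<Sum>k<n. e k - c k)"
      using ce by (intro sum_mono lip) (auto simp: nonoverlapping_in_def)
    with len show "(\<Sum>k<n. norm (g (\<phi> (e k)) - g (\<phi> (c k)))) < \<epsilon>"
      by (intro small nonoverlapping_in_image[OF ce mono range]) auto
  qed
qed

lemma abs_cont_on_dominated:
  fixes h :: "real \<Rightarrow> 'a::real_normed_vector"
  assumes g1: "abs_cont_on a b g1" and g2: "abs_cont_on a b g2"
    and dom: "\<And>x y. a \<le> x \<Longrightarrow> x \<le> y \<Longrightarrow> y \<le> b \<Longrightarrow>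
      norm (h y - h x) \<le> norm (g1 y - g1 x) + norm (g2 y - g2 x)"
  shows "abs_cont_on a b h"
  unfolding abs_cont_on_iff
proof (intro allI impI)
  fix \<epsilon> :: real assume "\<epsilon> > 0"
  then have "\<epsilon> / 2 > 0" by simp
  obtain d1 where d1: "d1 > 0" and small1: "\<And>n c e. nonoverlapping_in a b n c e \<Longrightarrow>
      (\<Sum>k<n. e k - c k) < d1 \<Longrightarrow> (\<Sum>k<n. norm (g1 (e k) - g1 (c k))) < \<epsilon> / 2"
    using abs_cont_onE[OF g1 \<open>\<epsilon> / 2 > 0\<close>] by blast
  obtain d2 where d2: "d2 > 0" and small2: "\<And>n c e. nonoverlapping_in a b n c e \<Longrightarrow>
      (\<Sum>k<n. e k - c k) < d2 \<Longrightarrow> (\<Sum>k<n. norm (g2 (e k) - g2 (c k))) < \<epsilon> / 2"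
    using abs_cont_onE[OF g2 \<open>\<epsilon> / 2 > 0\<close>] by blast
  show "\<exists>d>0. \<forall>n c e. nonoverlapping_in a b n c e \<longrightarrow> (\<Sum>k<n. e k - c k) < d \<longrightarrow>
      (\<Sum>k<n. norm (h (e k) - h (c k))) < \<epsilon>"
  proof (intro exI[of _ "min d1 d2"] conjI allI impI)
    fix n c e assume ce: "nonoverlapping_in a b n c e" and len: "(\<Sum>k<n. e k - c k) < min d1 d2"
    have "(\<Sum>k<n. norm (h (e k) - h (c k)))
        \<le> (\<Sum>k<n. norm (g1 (e k) - g1 (c k))) + (\<Sum>k<n. norm (g2 (e k) - g2 (c k)))"
      unfolding sum.distrib[symmetric] using ce by (intro sum_mono dom) (auto simp: nonoverlapping_in_def)
    also have "\<dots> < \<epsilon> / 2 + \<epsilon> / 2"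
      using len by (intro add_strict_mono small1 small2 ce) auto
    finally show "(\<Sum>k<n. norm (h (e k) - h (c k))) < \<epsilon>" by simp
  qed (use d1 d2 in simp)
qed

lemma abs_cont_on_subinterval:
  "abs_cont_on a b g \<Longrightarrow> a \<le> a' \<Longrightarrow> b' \<le> b \<Longrightarrow> abs_cont_on a' b' g"
  using abs_cont_on_compose[of a b g a' b' "\<lambda>s. s"] by simp

lemma abs_cont_on_shift:
  "abs_cont_on 0 (a + b) g \<Longrightarrow> 0 \<le> a \<Longrightarrow> abs_cont_on 0 b (\<lambda>s. g (a + s))"
  by (rule abs_cont_on_compose) auto

lemma norm_glue_diff_le:
  fixes x1 x2 :: "real \<Rightarrow> 'a::real_normed_vector"
  assumes "c \<le> e" "x2 0 = x1 a"
  shows "norm (glue a x1 x2 e - glue a x1 x2 c)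
    \<le> norm (x1 (min e a) - x1 (min c a)) + norm (x2 (max e a - a) - x2 (max c a - a))"
proof (cases "c \<le> a \<and> a < e")
  case True
  have "norm (x2 (e - a) - x1 c) \<le> norm (x1 a - x1 c) + norm (x2 (e - a) - x2 0)"
    using norm_triangle_ineq[of "x1 a - x1 c" "x2 (e - a) - x2 0"] assms(2) by simp
  then show ?thesis using True by (simp add: glue_def min_def max_def)
qed (use assms in \<open>auto simp: glue_def min_def max_def\<close>)

lemma abs_cont_on_glue:
  fixes x1 x2 :: "real \<Rightarrow> 'a::real_normed_vector"
  assumes "abs_cont_on 0 a x1" "abs_cont_on 0 b x2" "0 \<le> a" "0 \<le> b" "x2 0 = x1 a"
  shows "abs_cont_on 0 (a + b) (glue a x1 x2)"
proof (rule abs_cont_on_dominated)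
  show "abs_cont_on 0 (a + b) (\<lambda>s. x1 (min s a))"
    by (rule abs_cont_on_compose[OF assms(1)]) (use assms(3) in \<open>auto simp: min_def\<close>)
  show "abs_cont_on 0 (a + b) (\<lambda>s. x2 (max s a - a))"
    by (rule abs_cont_on_compose[OF assms(2)]) (use assms(3,4) in \<open>auto simp: max_def\<close>)
qed (use norm_glue_diff_le assms(5) in blast)

text \<open>
  Running payoffs are not known to be measurable, so null sets cannot be discarded by the
  usual AE congruences; singletons are handled explicitly instead.
\<close>

lemma set_integrable_singleton: "set_integrable lborel {c::real} (g :: real \<Rightarrow> real)"
proof -
  have "(\<lambda>x. indicator {c} x *\<^sub>R g x) = (\<lambda>x. g c * indicator {c} x)"
    by (auto simp: indicator_def fun_eq_iff)
  then show ?thesis unfolding set_integrable_def by (simp add: integrable_mult_right)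
qed

lemma set_integral_singleton: "(LINT x:{c::real}|lborel. (g :: real \<Rightarrow> real) x) = 0"
proof -
  have "(\<lambda>x. indicator {c} x *\<^sub>R g x) = (\<lambda>x. g c * indicator {c} x)"
    by (auto simp: indicator_def fun_eq_iff)
  then show ?thesis unfolding set_lebesgue_integral_def by (simp add: integral_mult_right_zero)
qed

lemma measurable_lebesgue_translation: "(\<lambda>s::real. c + s) \<in> lebesgue \<rightarrow>\<^sub>M lebesgue"
proof (rule measurableI)
  fix A :: "real set" assume "A \<in> sets lebesgue"
  moreover have "(\<lambda>s. c + s) -` A \<inter> space lebesgue = (\<lambda>s. -c + s) ` A" by force
  ultimately show "(\<lambda>s. c + s) -` A \<inter> space lebesgue \<in> sets lebesgue"
    using lebesgue_sets_translation by metis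
qed simp

lemma AE_lebesgue_translation:
  assumes "AE s in lebesgue. P s" shows "AE s in lebesgue. P (c + s::real)"
proof -
  from assms have "AE s in lborel. P s" by (simp add: AE_completion_iff)
  then obtain N where N: "{s \<in> space lborel. \<not> P s} \<subseteq> N" "emeasure lborel N = 0" "N \<in> sets lborel"
    by (auto elim: AE_E)
  then have "{s. s - (-c) \<in> N} \<in> null_sets lborel" by (intro null_sets_translation null_setsI)
  then have "AE s in lborel. P (c + s)"
    by (rule AE_I') (use N(1) in \<open>auto simp: add.commute\<close>)
  then show ?thesis by (simp add: AE_completion_iff)
qed

lemma set_integrable_translation:
  fixes g :: "real \<Rightarrow> real"
  shows "set_integrable lborel {a..a+b} g \<longleftrightarrow> set_integrable lborel {0..b} (\<lambda>s. g (a + s))"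
proof -
  have "(\<lambda>x. indicator {a..a+b} (a + 1 * x) *\<^sub>R g (a + 1 * x)) = (\<lambda>x. indicator {0..b} x *\<^sub>R g (a + x))"
    by (auto simp: indicator_def fun_eq_iff)
  then show ?thesis
    unfolding set_integrable_def
    using lborel_integrable_real_affine_iff[of 1 "\<lambda>x. indicator {a..a+b} x *\<^sub>R g x" a] by simp
qed

lemma set_integral_translation:
  fixes g :: "real \<Rightarrow> real"
  shows "(LINT s:{a..a+b}|lborel. g s) = (LINT s:{0..b}|lborel. g (a + s))"
proof -
  have "(\<lambda>x. indicator {a..a+b} (a + 1 * x) *\<^sub>R g (a + 1 * x)) = (\<lambda>x. indicator {0..b} x *\<^sub>R g (a + x))"
    by (auto simp: indicator_def fun_eq_iff)
  then show ?thesis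
    unfolding set_lebesgue_integral_def
    using lborel_integral_real_affine[of 1 "\<lambda>x. indicator {a..a+b} x *\<^sub>R g x" a] by simp
qed

lemma set_integral_split:
  fixes g :: "real \<Rightarrow> real"
  assumes ab: "0 \<le> a" "0 \<le> b" and g: "set_integrable lborel {0..a+b} g"
  shows "set_integrable lborel {0..a} g" "set_integrable lborel {0..b} (\<lambda>s. g (a + s))"
    and "(LINT s:{0..a+b}|lborel. g s) = (LINT s:{0..a}|lborel. g s) + (LINT s:{0..b}|lborel. g (a + s))"
proof -
  show "set_integrable lborel {0..a} g"
    by (rule set_integrable_subset[OF g]) (use ab in auto)
  have right: "set_integrable lborel {a..a+b} g"
    by (rule set_integrable_subset[OF g]) (use ab in auto)
  then show "set_integrable lborel {0..b} (\<lambda>s. g (a + s))" by (simp add: set_integrable_translation)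
  have left: "set_integrable lborel {0..<a} g"
    by (rule set_integrable_subset[OF g]) (use ab in auto)
  have parts: "{0..a+b} = {0..<a} \<union> {a..a+b}" "{0..a} = {0..<a} \<union> {a}" using ab by auto
  have "(LINT s:{0..a+b}|lborel. g s) = (LINT s:{0..<a}|lborel. g s) + (LINT s:{a..a+b}|lborel. g s)"
    unfolding parts(1) by (rule set_integral_Un) (use left right in auto)
  moreover have "(LINT s:{0..a}|lborel. g s) = (LINT s:{0..<a}|lborel. g s)"
    unfolding parts(2)
    by (subst set_integral_Un) (auto simp: left set_integrable_singleton set_integral_singleton)
  ultimately show "(LINT s:{0..a+b}|lborel. g s) = (LINT s:{0..a}|lborel. g s) + (LINT s:{0..b}|lborel. g (a + s))"
    by (simp add: set_integral_translation)
qed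

lemma set_integral_glue:
  fixes g1 g2 :: "real \<Rightarrow> real"
  assumes ab: "0 \<le> a" "0 \<le> b"
    and g1: "set_integrable lborel {0..a} g1" and g2: "set_integrable lborel {0..b} g2"
  shows "set_integrable lborel {0..a+b} (glue a g1 g2)"
    and "(LINT s:{0..a+b}|lborel. glue a g1 g2 s) = (LINT s:{0..a}|lborel. g1 s) + (LINT s:{0..b}|lborel. g2 s)"
proof -
  have left: "set_integrable lborel {0..a} (glue a g1 g2)"
    using g1 by (subst set_integrable_cong[where f'=g1]) (auto simp: glue_def)
  have g2_shifted: "set_integrable lborel {a..a+b} (\<lambda>s. g2 (s - a))"
    using g2 by (simp add: set_integrable_translation)
  then have g2': "set_integrable lborel {a<..a+b} (\<lambda>s. g2 (s - a))"
    by (rule set_integrable_subset) auto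
  then have right: "set_integrable lborel {a<..a+b} (glue a g1 g2)"
    by (subst set_integrable_cong[where f'="\<lambda>s. g2 (s - a)"]) (auto simp: glue_def)
  have parts: "{0..a+b} = {0..a} \<union> {a<..a+b}" using ab by auto
  show "set_integrable lborel {0..a+b} (glue a g1 g2)"
    unfolding parts using left right by (rule set_integrable_Un) auto
  have tail: "(LINT s:{a..a+b}|lborel. g2 (s - a)) = (LINT s:{a<..a+b}|lborel. g2 (s - a))"
  proof -
    have "{a..a+b} = {a} \<union> {a<..a+b}" using ab by auto
    then show ?thesis
      by (simp only:) (subst set_integral_Un, auto simp: g2' set_integrable_singleton set_integral_singleton)
  qed
  have "(LINT s:{0..a+b}|lborel. glue a g1 g2 s)
      = (LINT s:{0..a}|lborel. glue a g1 g2 s) + (LINT s:{a<..a+b}|lborel. glue a g1 g2 s)"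
    unfolding parts by (rule set_integral_Un) (use left right in auto)
  also have "\<dots> = (LINT s:{0..a}|lborel. g1 s) + (LINT s:{a..a+b}|lborel. g2 (s - a))"
    unfolding tail by (intro arg_cong2[where f="(+)"] set_lebesgue_integral_cong) (auto simp: glue_def)
  also have "\<dots> = (LINT s:{0..a}|lborel. g1 s) + (LINT s:{0..b}|lborel. g2 s)"
    using set_integral_translation[of a b "\<lambda>s. g2 (s - a)"] by simp
  finally show "(LINT s:{0..a+b}|lborel. glue a g1 g2 s) = (LINT s:{0..a}|lborel. g1 s) + (LINT s:{0..b}|lborel. g2 s)" .
qed

lemma admissibleD:
  assumes "admissible X U f uu xx t x0"
  shows "uu \<in> borel_measurable (restrict_space lebesgue {0..t})" "\<And>s. s \<in> {0..t} \<Longrightarrow> uu s \<in> U"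
    "\<And>s. s \<in> {0..t} \<Longrightarrow> xx s \<in> X" "abs_cont_on 0 t xx"
    "AE s in lebesgue. s \<in> {0..t} \<longrightarrow> (xx has_vector_derivative f (xx s) (uu s)) (at s within {0..t})"
    "xx 0 = x0"
  using assms unfolding admissible_def by blast+

lemma admissible_restrict:
  assumes adm: "admissible X U f uu xx t x0" and t': "0 \<le> t'" "t' \<le> t"
  shows "admissible X U f uu xx t' x0"
  unfolding admissible_def
proof (intro conjI ballI)
  note run = admissibleD[OF adm]
  show "uu \<in> borel_measurable (restrict_space lebesgue {0..t'})"
    by (rule measurable_restrict_mono[OF run(1)]) (use t' in auto)
  show "AE s in lebesgue. s \<in> {0..t'} \<longrightarrow> (xx has_vector_derivative f (xx s) (uu s)) (at s within {0..t'})"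
    by (rule eventually_mono[OF run(5)]) (use t' in \<open>auto intro: has_vector_derivative_within_subset\<close>)
  show "abs_cont_on 0 t' xx" by (rule abs_cont_on_subinterval[OF run(4)]) (use t' in auto)
qed (use admissibleD[OF adm] t' in auto)

lemma has_vector_derivative_shift:
  assumes "(g has_vector_derivative D) (at (a + s) within {a..a+b})"
  shows "((\<lambda>s. g (a + s)) has_vector_derivative D) (at s within {0..b})"
proof -
  have "((\<lambda>s. a + s) has_vector_derivative 1) (at s within {0..b})"
    by (auto intro!: derivative_eq_intros simp: has_real_derivative_iff_has_vector_derivative[symmetric])
  moreover have "(\<lambda>s. a + s) ` {0..b} = {a..a+b}"
    using image_add_atLeastAtMost[of a 0 b] by (simp add: add.commute)
  ultimately have "((g \<circ> (\<lambda>s. a + s)) has_vector_derivative 1 *\<^sub>R D) (at s within {0..b})"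
    using assms by (intro vector_diff_chain_within) (simp_all only:)
  then show ?thesis by (simp add: o_def)
qed

lemma admissible_shift:
  assumes adm: "admissible X U f uu xx (a + b) x0" and ab: "0 \<le> a" "0 \<le> b"
  shows "admissible X U f (\<lambda>s. uu (a + s)) (\<lambda>s. xx (a + s)) b (xx a)"
  unfolding admissible_def
proof (intro conjI ballI)
  note run = admissibleD[OF adm]
  have "(\<lambda>s. a + s) \<in> restrict_space lebesgue {0..b} \<rightarrow>\<^sub>M restrict_space lebesgue {0..a+b}"
    by (rule measurable_restrict_space3[OF measurable_lebesgue_translation]) (use ab in auto)
  then show "(\<lambda>s. uu (a + s)) \<in> borel_measurable (restrict_space lebesgue {0..b})"
    using run(1) by (rule measurable_compose)
  have "AE s in lebesgue. a + s \<in> {0..a+b} \<longrightarrow>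
      (xx has_vector_derivative f (xx (a + s)) (uu (a + s))) (at (a + s) within {0..a+b})"
    using run(5) by (rule AE_lebesgue_translation)
  then show "AE s in lebesgue. s \<in> {0..b} \<longrightarrow>
      ((\<lambda>s. xx (a + s)) has_vector_derivative f (xx (a + s)) (uu (a + s))) (at s within {0..b})"
    by (rule eventually_mono)
       (use ab in \<open>auto intro!: has_vector_derivative_shift intro: has_vector_derivative_within_subset\<close>)
  show "abs_cont_on 0 b (\<lambda>s. xx (a + s))"
    using run(4) ab(1) by (rule abs_cont_on_shift)
qed (use admissibleD[OF adm] ab in auto)

lemma measurable_glue:
  fixes u1 u2 :: "real \<Rightarrow> 'a::euclidean_space"
  assumes u1: "u1 \<in> borel_measurable (restrict_space lebesgue {0..a})"
    and u2: "u2 \<in> borel_measurable (restrict_space lebesgue {0..b})" and ab: "0 \<le> a" "0 \<le> b"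
  shows "glue a u1 u2 \<in> borel_measurable (restrict_space lebesgue {0..a+b})"
proof -
  have m1: "(\<lambda>s. indicator {0..a} s *\<^sub>R u1 s) \<in> borel_measurable lebesgue"
    using u1 by (subst (asm) borel_measurable_restrict_space_iff) auto
  have "(\<lambda>s. indicator {0..b} s *\<^sub>R u2 s) \<in> borel_measurable lebesgue"
    using u2 by (subst (asm) borel_measurable_restrict_space_iff) auto
  then have "(\<lambda>s. indicator {0..b} (s - a) *\<^sub>R u2 (s - a)) \<in> borel_measurable lebesgue"
    using measurable_compose[OF measurable_lebesgue_translation[of "-a"]] by simp
  then have m2: "(\<lambda>s. indicator {a<..a+b} s *\<^sub>R (indicator {0..b} (s - a) *\<^sub>R u2 (s - a))) \<in> borel_measurable lebesgue"
    by (rule borel_measurable_scaleR[OF borel_measurable_indicator, rotated]) simp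
  have "(\<lambda>s. indicator {0..a+b} s *\<^sub>R glue a u1 u2 s) =
      (\<lambda>s. indicator {0..a} s *\<^sub>R u1 s + indicator {a<..a+b} s *\<^sub>R (indicator {0..b} (s - a) *\<^sub>R u2 (s - a)))"
    using ab by (auto simp: fun_eq_iff indicator_def glue_def)
  then have "(\<lambda>s. indicator {0..a+b} s *\<^sub>R glue a u1 u2 s) \<in> borel_measurable lebesgue"
    using m1 m2 by simp
  then show ?thesis by (subst borel_measurable_restrict_space_iff) auto
qed

lemma has_vector_derivative_glue_left:
  assumes "(x1 has_vector_derivative D) (at s within {0..a})" "0 < s" "s < a"
  shows "(glue a x1 x2 has_vector_derivative D) (at s)"
proof (rule has_vector_derivative_transform_within_open[where S="{..<a}"])
  show "(x1 has_vector_derivative D) (at s)" using assms by (simp add: at_within_Icc_at)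
qed (use assms in \<open>auto simp: glue_def\<close>)

lemma has_vector_derivative_glue_right:
  assumes "(x2 has_vector_derivative D) (at (s - a) within {0..b})" "a < s" "s < a + b"
  shows "(glue a x1 x2 has_vector_derivative D) (at s)"
proof (rule has_vector_derivative_transform_within_open[where S="{a<..}"])
  have "(x2 has_vector_derivative D) (at (s - a))" using assms by (simp add: at_within_Icc_at)
  moreover have "((\<lambda>s. s - a) has_vector_derivative 1) (at s)"
    by (auto intro!: derivative_eq_intros simp: has_real_derivative_iff_has_vector_derivative[symmetric])
  ultimately show "((\<lambda>s. x2 (s - a)) has_vector_derivative D) (at s)"
    using vector_diff_chain_at[of "\<lambda>s. s - a" 1 s x2 D] by (simp add: o_def)
  show "open {a<..}" "s \<in> {a<..}" using assms by auto
qed (simp add: glue_def)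

lemma AE_has_vector_derivative_glue:
  assumes d1: "AE s in lebesgue. s \<in> {0..a} \<longrightarrow> (x1 has_vector_derivative F1 s) (at s within {0..a})"
    and d2: "AE s in lebesgue. s \<in> {0..b} \<longrightarrow> (x2 has_vector_derivative F2 s) (at s within {0..b})"
  shows "AE s in lebesgue. s \<in> {0..a+b} \<longrightarrow>
    (glue a x1 x2 has_vector_derivative glue a F1 F2 s) (at s within {0..a+b})"
proof -
  have "AE s in lebesgue. s - a \<in> {0..b} \<longrightarrow> (x2 has_vector_derivative F2 (s - a)) (at (s - a) within {0..b})"
    using AE_lebesgue_translation[OF d2, of "-a"] by simp
  moreover have "AE s in lborel. s \<noteq> (0::real)" "AE s in lborel. s \<noteq> (a::real)" "AE s in lborel. s \<noteq> (a + b::real)"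
    by (rule AE_lborel_singleton)+
  then have "AE s in lebesgue. s \<noteq> 0 \<and> s \<noteq> a \<and> s \<noteq> a + b"
    by (simp add: AE_completion_iff eventually_conj_iff)
  ultimately show ?thesis using d1
  proof eventually_elim
    case (elim s)
    show ?case
    proof
      assume s: "s \<in> {0..a+b}"
      have "s < a \<or> a < s" using elim by auto
      then have "(glue a x1 x2 has_vector_derivative glue a F1 F2 s) (at s)"
        using elim s by (auto simp: glue_def intro: has_vector_derivative_glue_left has_vector_derivative_glue_right)
      then show "(glue a x1 x2 has_vector_derivative glue a F1 F2 s) (at s within {0..a+b})"
        by (rule has_vector_derivative_at_within)
    qed
  qed
qed

lemma admissible_glue:
  assumes adm1: "admissible X U f u1 x1 a x0" and adm2: "admissible X U f u2 x2 b (x1 a)"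
    and ab: "0 \<le> a" "0 \<le> b"
  shows "admissible X U f (glue a u1 u2) (glue a x1 x2) (a + b) x0"
  unfolding admissible_def
proof (intro conjI ballI)
  note run1 = admissibleD[OF adm1] and run2 = admissibleD[OF adm2]
  show "glue a u1 u2 \<in> borel_measurable (restrict_space lebesgue {0..a+b})"
    using run1(1) run2(1) ab by (rule measurable_glue)
  show "abs_cont_on 0 (a + b) (glue a x1 x2)"
    using run1(4) run2(4) ab run2(6) by (rule abs_cont_on_glue)
  have "glue a (\<lambda>s. f (x1 s) (u1 s)) (\<lambda>s. f (x2 s) (u2 s)) s = f (glue a x1 x2 s) (glue a u1 u2 s)" for s
    by (simp add: glue_def)
  with AE_has_vector_derivative_glue[OF run1(5) run2(5)]
  show "AE s in lebesgue. s \<in> {0..a+b} \<longrightarrow>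
      (glue a x1 x2 has_vector_derivative f (glue a x1 x2 s) (glue a u1 u2 s)) (at s within {0..a+b})"
    by simp
  show "glue a u1 u2 s \<in> U" if "s \<in> {0..a+b}" for s
    using that run1(2) run2(2)[of "s - a"] by (auto simp: glue_def)
  show "glue a x1 x2 s \<in> X" if "s \<in> {0..a+b}" for s
    using that run1(3) run2(3)[of "s - a"] by (auto simp: glue_def)
  show "glue a x1 x2 0 = x0" using run1(6) ab by (simp add: glue_def)
qed

section \<open>The semigroup\<close>

definition running_payoff :: "('n \<Rightarrow> 'm \<Rightarrow> real) \<Rightarrow> real \<Rightarrow> (real \<Rightarrow> 'm) \<Rightarrow> (real \<Rightarrow> 'n) \<Rightarrow> real" where
  "running_payoff ell t uu xx = (LINT s:{0..t}|lborel. ell (xx s) (uu s))"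

definition admissible_runs ::
  "'n set \<Rightarrow> 'm set \<Rightarrow> ('n::euclidean_space \<Rightarrow> 'm::euclidean_space \<Rightarrow> real) \<Rightarrow> ('n \<Rightarrow> 'm \<Rightarrow> 'n) \<Rightarrow>
   real \<Rightarrow> 'n \<Rightarrow> ((real \<Rightarrow> 'm) \<times> (real \<Rightarrow> 'n)) set" where
  "admissible_runs X U ell f t x0 = {(uu, xx). admissible X U f uu xx t x0 \<and>
      set_integrable lborel {0..t} (\<lambda>s. ell (xx s) (uu s))}"

lemma Ssem_eq_SUP: "Ssem X U ell f t g x0 =
   (SUP r\<in>admissible_runs X U ell f t x0. mp_plus (ereal (running_payoff ell t (fst r) (snd r))) (g (snd r t)))"
proof -
  have runs: "{F uu xx | uu xx. P uu xx} = (\<lambda>r. F (fst r) (snd r)) ` {(uu, xx). P uu xx}" for F P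
    by force
  show ?thesis unfolding Ssem_def admissible_runs_def running_payoff_def runs by simp
qed

lemma Ssem_SUP_mp_plus: "Ssem X U ell f t (\<lambda>y. SUP k\<in>K. mp_plus (g k y) (c k)) x
   = (SUP k\<in>K. mp_plus (Ssem X U ell f t (g k) x) (c k))"
  unfolding Ssem_eq_SUP mp_plus_SUP SUP_mp_plus
  by (subst SUP_commute) (simp add: mp_plus_assoc)

lemma Ssem_add_ereal: "Ssem X U ell f t (\<lambda>y. g y + ereal c) x = Ssem X U ell f t g x + ereal c"
  unfolding Ssem_eq_SUP mp_plus_ereal[symmetric] SUP_mp_plus by (simp add: mp_plus_assoc)

lemma admissible_runs_endpoint: "r \<in> admissible_runs X U ell f t x0 \<Longrightarrow> t \<ge> 0 \<Longrightarrow> snd r t \<in> X"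
  unfolding admissible_runs_def admissible_def by auto

lemma monotone_subhomogeneous_Ssem:
  assumes "t \<ge> 0" shows "monotone_subhomogeneous X (Ssem X U ell f t)"
proof (rule monotone_subhomogeneousI)
  fix g h :: "_ \<Rightarrow> ereal" and x assume "\<And>y. y \<in> X \<Longrightarrow> g y \<le> h y"
  then show "Ssem X U ell f t g x \<le> Ssem X U ell f t h x"
    unfolding Ssem_eq_SUP
    by (intro SUP_mono) (use admissible_runs_endpoint[OF _ assms] in \<open>blast intro: mp_plus_mono\<close>)
qed (simp add: Ssem_add_ereal)

lemma Ssem_no_controls:
  assumes "U = {}" "t \<ge> 0" shows "Ssem X U ell f t g = (\<lambda>x. -\<infinity>)"
proof -
  have "admissible_runs X U ell f t x = {}" for x
    using assms unfolding admissible_runs_def admissible_def by fastforce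
  then show ?thesis unfolding Ssem_eq_SUP by (simp add: fun_eq_iff bot_ereal_def)
qed

lemma Ssem_0:
  assumes "x \<in> X" "U \<noteq> {}" shows "Ssem X U ell f 0 g x = g x"
proof (rule antisym)
  have payoff_0: "running_payoff ell 0 uu xx = 0" for uu xx
    by (simp add: running_payoff_def set_integral_singleton)
  show "Ssem X U ell f 0 g x \<le> g x"
    unfolding Ssem_eq_SUP payoff_0
    by (rule SUP_least) (auto simp: admissible_runs_def admissible_def mp_plus_def)
  obtain u0 where u0: "u0 \<in> U" using assms by auto
  have "AE s in lborel. s \<noteq> (0::real)" by (rule AE_lborel_singleton)
  then have "AE s in lebesgue. s \<in> {0..0} \<longrightarrow> ((\<lambda>_. x) has_vector_derivative f x u0) (at s within {0..0})"
    unfolding AE_completion_iff by (rule eventually_mono) auto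
  moreover have "abs_cont_on 0 0 (\<lambda>_. x)"
    unfolding abs_cont_on_def by (auto intro: exI[of _ 1])
  ultimately have "((\<lambda>_. u0), (\<lambda>_. x)) \<in> admissible_runs X U ell f 0 x"
    using u0 assms(1) by (simp add: admissible_runs_def admissible_def set_integrable_singleton)
  then show "g x \<le> Ssem X U ell f 0 g x"
    unfolding Ssem_eq_SUP by (rule SUP_upper2) (simp add: payoff_0 mp_plus_def zero_ereal_def[symmetric])
qed

lemma Ssem_add_le:
  assumes ab: "0 \<le> a" "0 \<le> b"
  shows "Ssem X U ell f (a + b) g x0 \<le> Ssem X U ell f a (Ssem X U ell f b g) x0"
  unfolding Ssem_eq_SUP[of X U ell f "a + b"]
proof (rule SUP_least)
  fix r assume r: "r \<in> admissible_runs X U ell f (a + b) x0"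
  obtain uu xx where r_eq: "r = (uu, xx)" by (cases r)
  have adm: "admissible X U f uu xx (a + b) x0"
    and int: "set_integrable lborel {0..a+b} (\<lambda>s. ell (xx s) (uu s))"
    using r by (auto simp: admissible_runs_def r_eq)
  note split = set_integral_split[OF ab int]
  have first: "(uu, xx) \<in> admissible_runs X U ell f a x0"
    using admissible_restrict[OF adm ab(1)] split(1) ab by (auto simp: admissible_runs_def)
  have rest: "((\<lambda>s. uu (a + s)), (\<lambda>s. xx (a + s))) \<in> admissible_runs X U ell f b (xx a)"
    using admissible_shift[OF adm ab] split(2) by (auto simp: admissible_runs_def)
  have "mp_plus (ereal (running_payoff ell (a + b) uu xx)) (g (xx (a + b)))
      = mp_plus (ereal (running_payoff ell a uu xx))
          (mp_plus (ereal (running_payoff ell b (\<lambda>s. uu (a + s)) (\<lambda>s. xx (a + s)))) (g (xx (a + b))))"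
    unfolding running_payoff_def split(3) by (simp add: mp_plus_ereal_add)
  also have "\<dots> \<le> mp_plus (ereal (running_payoff ell a uu xx)) (Ssem X U ell f b g (xx a))"
    unfolding Ssem_eq_SUP[of X U ell f b] by (rule mp_plus_mono[OF order_refl], rule SUP_upper2[OF rest]) simp
  also have "\<dots> \<le> Ssem X U ell f a (Ssem X U ell f b g) x0"
    unfolding Ssem_eq_SUP[of X U ell f a _ x0] by (rule SUP_upper2[OF first]) simp
  finally show "mp_plus (ereal (running_payoff ell (a + b) (fst r) (snd r))) (g (snd r (a + b)))
      \<le> Ssem X U ell f a (Ssem X U ell f b g) x0"
    by (simp add: r_eq)
qed

lemma Ssem_add_ge:
  assumes ab: "0 \<le> a" "0 \<le> b"
  shows "Ssem X U ell f a (Ssem X U ell f b g) x0 \<le> Ssem X U ell f (a + b) g x0"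
  unfolding Ssem_eq_SUP[of X U ell f a _ x0] Ssem_eq_SUP[of X U ell f b] mp_plus_SUP
proof (intro SUP_least)
  fix r1 r2 assume r1: "r1 \<in> admissible_runs X U ell f a x0"
    and r2: "r2 \<in> admissible_runs X U ell f b (snd r1 a)"
  obtain u1 x1 u2 x2 where r_eq: "r1 = (u1, x1)" "r2 = (u2, x2)" by (cases r1, cases r2)
  have adm1: "admissible X U f u1 x1 a x0" and int1: "set_integrable lborel {0..a} (\<lambda>s. ell (x1 s) (u1 s))"
    and adm2: "admissible X U f u2 x2 b (x1 a)" and int2: "set_integrable lborel {0..b} (\<lambda>s. ell (x2 s) (u2 s))"
    using r1 r2 by (auto simp: admissible_runs_def r_eq)
  have integrand: "(\<lambda>s. ell (glue a x1 x2 s) (glue a u1 u2 s)) =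
      glue a (\<lambda>s. ell (x1 s) (u1 s)) (\<lambda>s. ell (x2 s) (u2 s))"
    by (simp add: fun_eq_iff glue_def)
  note glued = set_integral_glue[OF ab int1 int2, folded integrand]
  have r: "(glue a u1 u2, glue a x1 x2) \<in> admissible_runs X U ell f (a + b) x0"
    using admissible_glue[OF adm1 adm2 ab] glued(1) by (simp add: admissible_runs_def)
  have end_point: "glue a x1 x2 (a + b) = x2 b"
    using ab admissibleD(6)[OF adm2] by (cases "b = 0") (auto simp: glue_def)
  have "mp_plus (ereal (running_payoff ell a u1 x1)) (mp_plus (ereal (running_payoff ell b u2 x2)) (g (x2 b)))
      = mp_plus (ereal (running_payoff ell (a + b) (glue a u1 u2) (glue a x1 x2))) (g (glue a x1 x2 (a + b)))"
    unfolding running_payoff_def glued(2) end_point by (simp add: mp_plus_ereal_add)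
  also have "\<dots> \<le> Ssem X U ell f (a + b) g x0"
    unfolding Ssem_eq_SUP[of X U ell f "a + b"] by (rule SUP_upper2[OF r]) simp
  finally show "mp_plus (ereal (running_payoff ell a (fst r1) (snd r1)))
      (mp_plus (ereal (running_payoff ell b (fst r2) (snd r2))) (g (snd r2 b))) \<le> Ssem X U ell f (a + b) g x0"
    by (simp add: r_eq)
qed

lemma Ssem_add:
  "0 \<le> a \<Longrightarrow> 0 \<le> b \<Longrightarrow> Ssem X U ell f (a + b) g = Ssem X U ell f a (Ssem X U ell f b g)"
  by (rule ext, rule antisym) (auto intro: Ssem_add_le Ssem_add_ge)

text \<open>
  Without controls S^0 is constantly -\<infinity> rather than the identity, so P_W \<phi> and
  P_W v^0 may differ; they agree after one more step of the semigroup.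
\<close>

lemma sup_dist_Ssem_PW_le:
  assumes "t \<ge> 0"
  shows "sup_dist X (Ssem X U ell f t (PW X p w \<phi>)) (Ssem X U ell f t (Ssem X U ell f 0 \<phi>))
    \<le> sup_dist X (PW X p w (Ssem X U ell f 0 \<phi>)) (Ssem X U ell f 0 \<phi>)"
proof -
  have "Ssem X U ell f t (PW X p w \<phi>) = Ssem X U ell f t (PW X p w (Ssem X U ell f 0 \<phi>))"
  proof (cases "U = {}")
    case False
    then have "Wres X w (Ssem X U ell f 0 \<phi>) = Wres X w \<phi>"
      unfolding Wres_def by (auto intro!: INF_cong simp: Ssem_0 fun_eq_iff)
    then show ?thesis by (simp add: PW_def)
  qed (use assms in \<open>simp add: Ssem_no_controls\<close>)
  then show ?thesis
    using assms by (simp add: sup_dist_monotone_subhomogeneous monotone_subhomogeneous_Ssem)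
qed

section \<open>The ideal max-plus finite element method\<close>

lemma mat_app_eq_SUP: "p \<ge> 1 \<Longrightarrow> mat_app p A lam j = (SUP k\<in>{..<p}. mp_plus (A j k) (lam k))"
  unfolding mat_app_def by (subst cSup_eq_Max) (auto simp: lessThan_empty_iff)

lemma mat_res_eq_INF: "q \<ge> 1 \<Longrightarrow> mat_res q A mu i = (INF j\<in>{..<q}. resid (A j i) (mu j))"
  unfolding mat_res_def by (subst cInf_eq_Min) (auto simp: lessThan_empty_iff)

lemma mat_app_Kh:
  assumes "p \<ge> 1"
  shows "mat_app p (Kh X U ell f d z w) lam = (\<lambda>j. mp_pair X (z j) (Ssem X U ell f d (Wop p w lam)))"
proof (rule ext)
  fix j
  have "mp_pair X (z j) (Ssem X U ell f d (Wop p w lam))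
      = (SUP x\<in>X. SUP i\<in>{..<p}. mp_plus (mp_plus (z j x) (Ssem X U ell f d (w i) x)) (lam i))"
    unfolding mp_pair_def Wop_def Ssem_SUP_mp_plus mp_plus_SUP mp_plus_assoc ..
  also have "\<dots> = (SUP i\<in>{..<p}. mp_plus (Kh X U ell f d z w j i) (lam i))"
    unfolding Kh_def mp_pair_def SUP_mp_plus by (rule SUP_commute)
  finally show "mat_app p (Kh X U ell f d z w) lam j = mp_pair X (z j) (Ssem X U ell f d (Wop p w lam))"
    unfolding mat_app_eq_SUP[OF assms] ..
qed

lemma mat_res_Mh:
  assumes "q \<ge> 1"
  shows "mat_res q (Mh X z w) (\<lambda>j. mp_pair X (z j) g) = Wres X w (PZ X q z g)"
proof (rule ext)
  fix i
  have "Wres X w (PZ X q z g) i = (INF x\<in>X. INF j\<in>{..<q}. resid (mp_plus (z j x) (w i x)) (mp_pair X (z j) g))"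
    unfolding Wres_def PZ_eq_INF[OF assms] resid_INF resid_resid ..
  also have "\<dots> = (INF j\<in>{..<q}. resid (Mh X z w j i) (mp_pair X (z j) g))"
    unfolding Mh_def mp_pair_def resid_SUP by (rule INF_commute)
  finally show "mat_res q (Mh X z w) (\<lambda>j. mp_pair X (z j) g) i = Wres X w (PZ X q z g) i"
    unfolding mat_res_eq_INF[OF assms] ..
qed

lemma fem_value_0: "fem_value X U ell f d p q w z \<phi> 0 = PW X p w \<phi>"
  unfolding fem_value_def fem_coeffs_def PW_def by simp

lemma fem_value_Suc:
  assumes "p \<ge> 1" "q \<ge> 1"
  shows "fem_value X U ell f d p q w z \<phi> (Suc k) =
     PW X p w (PZ X q z (Ssem X U ell f d (fem_value X U ell f d p q w z \<phi> k)))"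
  unfolding fem_value_def fem_coeffs_def PW_def
  by (simp add: mat_app_Kh[OF assms(1)] mat_res_Mh[OF assms(2)])

theorem lemma5p2:
  fixes X :: "(real^'n) set" and U :: "(real^'m) set"
    and ell :: "real^'n \<Rightarrow> real^'m \<Rightarrow> real"
    and f :: "real^'n \<Rightarrow> real^'m \<Rightarrow> real^'n"
    and T :: real and N :: nat and \<phi> :: "real^'n \<Rightarrow> ereal"
    and p q :: nat and w z :: "nat \<Rightarrow> real^'n \<Rightarrow> ereal"
  assumes "T > 0" and "N \<ge> 1"
    and "\<forall>x\<in>X. \<phi> x \<noteq> \<infinity>"
    and "p \<ge> 1" and "q \<ge> 1"
    and "\<forall>i<p. \<forall>x\<in>X. w i x \<noteq> \<infinity>"
    and "\<forall>j<q. \<forall>x\<in>X. z j x \<noteq> \<infinity>"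
  shows "sup_dist X (fem_value X U ell f (T / real N) p q w z \<phi> N) (Ssem X U ell f T \<phi>)
    \<le> sup_dist X (PW X p w (Ssem X U ell f 0 \<phi>)) (Ssem X U ell f 0 \<phi>)
       + (\<Sum>k\<in>{1..N}. sup_dist X
            (PW X p w (PZ X q z (Ssem X U ell f (real k * (T / real N)) \<phi>)))
            (Ssem X U ell f (real k * (T / real N)) \<phi>))"
proof -
  define d where "d = T / real N"
  have d: "d > 0" and T: "T = real N * d" using assms(1,2) by (simp_all add: d_def)
  define v where "v k = Ssem X U ell f (real k * d) \<phi>" for k
  define vh where "vh k = fem_value X U ell f d p q w z \<phi> k" for k
  obtain n where N: "N = Suc n" using assms(2) by (cases N) auto
  have "sup_dist X (vh N) (v N) \<le> sup_dist X (Ssem X U ell f d (vh 0)) (Ssem X U ell f d (v 0))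
      + (\<Sum>k\<in>{1..N}. sup_dist X (PW X p w (PZ X q z (v k))) (v k))"
    unfolding N
  proof (rule sup_dist_iteration_le)
    show "monotone_subhomogeneous X (\<lambda>g. PW X p w (PZ X q z g))"
      using monotone_subhomogeneous_PW monotone_subhomogeneous_PZ[OF assms(5)]
      by (rule monotone_subhomogeneous_comp)
    show "monotone_subhomogeneous X (Ssem X U ell f d)" using d by (intro monotone_subhomogeneous_Ssem) simp
    show "vh (Suc k) = PW X p w (PZ X q z (Ssem X U ell f d (vh k)))" for k
      unfolding vh_def by (rule fem_value_Suc[OF assms(4,5)])
    show "v (Suc k) = Ssem X U ell f d (v k)" for k
      unfolding v_def using Ssem_add[of d "real k * d"] d by (simp add: algebra_simps)
  qed
  moreover have "sup_dist X (Ssem X U ell f d (vh 0)) (Ssem X U ell f d (v 0)) \<le> sup_dist X (PW X p w (v 0)) (v 0)"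
    unfolding vh_def v_def fem_value_0 using d by (simp add: sup_dist_Ssem_PW_le)
  ultimately have "sup_dist X (vh N) (v N)
      \<le> sup_dist X (PW X p w (v 0)) (v 0) + (\<Sum>k\<in>{1..N}. sup_dist X (PW X p w (PZ X q z (v k))) (v k))"
    by (meson add_right_mono order_trans)
  then show ?thesis unfolding vh_def v_def d_def[symmetric] by (simp add: T)
qed

end
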